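(* Let $\Delta\subset\mathbb{R}$ be a finite interval, let $N$ be the number of eigenvalues of $H_n$ in $\Delta$, and let $\beta>0$. Then $$\bigl((N-1)^+\bigr)^{1+\beta}\le(n|\Delta|)^\beta\int_\Delta\sum_{\ell=1}^n\|M_n(E,\ell)\|^{2+2\beta}\,dE.$$
   Context: $H_n$ is an $n\times n$ symmetric tridiagonal matrix with real diagonal entries $v_{1,n},\dots,v_{n,n}$ and all sub- and super-diagonal entries equal to $1$ (in the paper $v_{\ell,n}=\sigma\omega_\ell/\sqrt n$ with $\omega_\ell$ random). With $T(x)=\begin{pmatrix}x&-1\\1&0\end{pmatrix}$, $M_n(E,\ell)=T(E-v_{\ell,n})T(E-v_{\ell-1,n})\cdots T(E-v_{1,n})$. $\|\cdot\|$ denotes the Hilbert–Schmidt norm on $2\times2$ matrices, and $|\Delta|$ is the length of $\Delta$. *)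

theory Defs
  imports "HOL-Analysis.Analysis"
begin

definition jacobiH :: "nat \<Rightarrow> (nat \<Rightarrow> real) \<Rightarrow> nat \<Rightarrow> nat \<Rightarrow> real" where
  "jacobiH n v i j = (if i = j then v i else if i = j + 1 \<or> j = i + 1 then 1 else 0)"

definition is_eigenvalue_H :: "nat \<Rightarrow> (nat \<Rightarrow> real) \<Rightarrow> real \<Rightarrow> bool" where
  "is_eigenvalue_H n v E \<longleftrightarrow>
     (\<exists>u :: nat \<Rightarrow> real. (\<exists>i\<in>{1..n}. u i \<noteq> 0) \<and>
        (\<forall>i\<in>{1..n}. (\<Sum>j=1..n. jacobiH n v i j * u j) = E * u i))"

definition eig_count :: "nat \<Rightarrow> (nat \<Rightarrow> real) \<Rightarrow> real set \<Rightarrow> nat" where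
  "eig_count n v D = card {E \<in> D. is_eigenvalue_H n v E}"

definition transferT :: "real \<Rightarrow> real^2^2" where
  "transferT x = vector [vector [x, -1], vector [1, 0]]"

fun transferM :: "(nat \<Rightarrow> real) \<Rightarrow> real \<Rightarrow> nat \<Rightarrow> real^2^2" where
  "transferM v E 0 = mat 1"
| "transferM v E (Suc l) = transferT (E - v (Suc l)) ** transferM v E l"

end

theory Submission
  imports Defs
begin

text \<open>Eigenvalues of \<open>H\<^sub>n\<close> are zeros of \<open>a(E) = u\<^sub>n\<^sub>+\<^sub>1(E)\<close>, where \<open>u\<close> solves the eigenvalue
  recursion with \<open>u\<^sub>0 = 0, u\<^sub>1 = 1\<close>. With \<open>b(E) = w\<^sub>n\<^sub>+\<^sub>1(E)\<close> for the solution \<open>w\<^sub>0 = 1, w\<^sub>1 = 0\<close>,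
  variation of constants expresses the Wronskian \<open>a b' - a' b\<close> as \<open>\<Sum>\<^sub>l G(n+1,l)\<^sup>2\<close> in terms of the
  discrete Green function \<open>G\<close>; it is \<open>\<ge> 1\<close> because \<open>G(n+1,n) = 1\<close>, and by Cauchy-Schwarz it is at
  most \<open>(a\<^sup>2 + b\<^sup>2) g(E)\<close> with \<open>g(E) = \<Sum>\<^sub>l \<parallel>M\<^sub>n(E,l)\<parallel>\<^sup>2\<close>. So the point \<open>(b, a)\<close> turns monotonically
  with angular speed at most \<open>g\<close>; between two zeros of \<open>a\<close> it turns by more than \<open>arctan 2 > 1\<close>,
  whence \<open>N - 1 \<le> \<integral>\<^sub>\<Delta> g\<close>. Jensen's inequality for \<open>t\<^sup>1\<^sup>+\<^sup>\<beta>\<close> on \<open>\<Delta> \<times> {1..n}\<close> finishes the proof.\<close>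

lemma powr_above_tangent:
  fixes x c p :: real
  assumes "0 \<le> x" and "0 < c" and "1 \<le> p"
  shows "c powr p + p * c powr (p - 1) * (x - c) \<le> x powr p"
proof (cases "x = 0")
  case True
  have "c powr p = c * c powr (p - 1)"
    using \<open>0 < c\<close> by (simp add: powr_mult_base)
  then have "c powr p + p * c powr (p - 1) * (x - c) = (1 - p) * c powr p"
    using True by (simp add: algebra_simps)
  also have "\<dots> \<le> 0"
    using \<open>1 \<le> p\<close> by (simp add: mult_nonpos_nonneg)
  finally show ?thesis
    using True by simp
next
  case False
  have "((\<lambda>t. t powr p) has_real_derivative p * c powr (p - 1)) (at c within {0<..})"
    using \<open>0 < c\<close> by (auto intro!: derivative_eq_intros)
  then have "p * c powr (p - 1) * (x - c) \<le> x powr p - c powr p"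
    using assms False
    by (intro convex_on_imp_above_tangent[OF powr_convex]) (auto simp: interior_open)
  then show ?thesis by simp
qed

lemma integral_sum_powr_ge_tangent:
  fixes f :: "'i \<Rightarrow> 'a::euclidean_space \<Rightarrow> real" and S :: "'a set"
  assumes "finite L" and "1 \<le> p" and "0 < c" and measure: "((\<lambda>x. 1) has_integral m) S"
    and sum_integral: "((\<lambda>x. \<Sum>l\<in>L. f l x) has_integral I) S"
    and powr_integrable: "(\<lambda>x. \<Sum>l\<in>L. f l x powr p) integrable_on S"
    and nonneg: "\<And>l x. l \<in> L \<Longrightarrow> x \<in> S \<Longrightarrow> 0 \<le> f l x"
  shows "real (card L) * c powr p * m + p * c powr (p - 1) * (I - real (card L) * c * m)
    \<le> integral S (\<lambda>x. \<Sum>l\<in>L. f l x powr p)"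
proof -
  have "(\<lambda>x. \<Sum>l\<in>L. c powr p + p * c powr (p - 1) * (f l x - c)) = (\<lambda>x. real (card L) * c powr p * 1
      + p * c powr (p - 1) * ((\<Sum>l\<in>L. f l x) - real (card L) * c * 1))"
    by (simp add: sum.distrib sum_distrib_left sum_subtractf algebra_simps)
  then have "((\<lambda>x. \<Sum>l\<in>L. c powr p + p * c powr (p - 1) * (f l x - c)) has_integral
      real (card L) * c powr p * m + p * c powr (p - 1) * (I - real (card L) * c * m)) S"
    by (simp only: has_integral_add has_integral_mult_right has_integral_diff sum_integral measure)
  moreover have "(\<Sum>l\<in>L. c powr p + p * c powr (p - 1) * (f l x - c)) \<le> (\<Sum>l\<in>L. f l x powr p)"
    if "x \<in> S" for x
    using that nonneg \<open>0 < c\<close> \<open>1 \<le> p\<close> by (intro sum_mono powr_above_tangent) auto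
  ultimately show ?thesis
    by (rule has_integral_le[OF _ integrable_integral[OF powr_integrable]])
qed

lemma powr_integral_sum_le:
  fixes f :: "'i \<Rightarrow> 'a::euclidean_space \<Rightarrow> real" and S :: "'a set"
  assumes "finite L" and "1 \<le> p" and "0 < m" and measure: "((\<lambda>x. 1) has_integral m) S"
    and integrable: "\<And>l. l \<in> L \<Longrightarrow> f l integrable_on S"
    and integrable_powr: "\<And>l. l \<in> L \<Longrightarrow> (\<lambda>x. f l x powr p) integrable_on S"
    and nonneg: "\<And>l x. l \<in> L \<Longrightarrow> x \<in> S \<Longrightarrow> 0 \<le> f l x"
  shows "integral S (\<lambda>x. \<Sum>l\<in>L. f l x) powr p
    \<le> (real (card L) * m) powr (p - 1) * integral S (\<lambda>x. \<Sum>l\<in>L. f l x powr p)"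
proof -
  define I where "I = integral S (\<lambda>x. \<Sum>l\<in>L. f l x)"
  define K where "K = real (card L) * m"
  have sum_integral: "((\<lambda>x. \<Sum>l\<in>L. f l x) has_integral I) S"
    unfolding I_def using \<open>finite L\<close> integrable by (intro integrable_integral integrable_sum)
  have powr_integrable: "(\<lambda>x. \<Sum>l\<in>L. f l x powr p) integrable_on S"
    using \<open>finite L\<close> integrable_powr by (intro integrable_sum)
  have "0 \<le> I"
    using nonneg by (intro has_integral_nonneg[OF sum_integral] sum_nonneg) auto
  show ?thesis
  proof (cases "I = 0")
    case True
    have "0 \<le> integral S (\<lambda>x. \<Sum>l\<in>L. f l x powr p)"
      using powr_integrable by (intro integral_nonneg sum_nonneg) auto
    then show ?thesis
      using True unfolding I_def by simp
  next
    case False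
    then have "L \<noteq> {}"
      unfolding I_def by auto
    then have "0 < K"
      unfolding K_def using \<open>finite L\<close> \<open>0 < m\<close> by (simp add: card_gt_0_iff)
    define c where "c = I / K"
    have "0 < c" and "K * c = I"
      unfolding c_def using False \<open>0 \<le> I\<close> \<open>0 < K\<close> by auto
    \<comment> \<open>Tangent at the mean value \<open>c\<close>: the linear term integrates to zero.\<close>
    have "real (card L) * c * m = I"
      using \<open>K * c = I\<close> unfolding K_def by (simp add: ac_simps)
    with integral_sum_powr_ge_tangent[OF \<open>finite L\<close> \<open>1 \<le> p\<close> \<open>0 < c\<close> measure sum_integral
        powr_integrable nonneg]
    have "K * c powr p \<le> integral S (\<lambda>x. \<Sum>l\<in>L. f l x powr p)"
      unfolding K_def by (simp add: ac_simps)
    moreover have "I powr p = K powr (p - 1) * (K * c powr p)"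
    proof -
      have "K powr p = K powr (p - 1) * K"
        using powr_add[of K "p - 1" 1] \<open>0 < K\<close> by simp
      moreover have "I powr p = K powr p * c powr p"
        using \<open>0 < K\<close> \<open>0 < c\<close> by (simp add: powr_mult flip: \<open>K * c = I\<close>)
      ultimately show ?thesis
        by (simp add: mult.assoc)
    qed
    ultimately show ?thesis
      unfolding I_def K_def using \<open>0 < K\<close> by (simp add: mult_left_mono)
  qed
qed

lemma integrable_on_bounded_convex:
  fixes f :: "'a::euclidean_space \<Rightarrow> 'b::euclidean_space"
  assumes "continuous_on (closure S) f" and "convex S" and "bounded S"
  shows "f integrable_on S"
proof -
  have S: "S \<in> lmeasurable"
    using assms by (simp add: measurable_convex)
  have "bounded (f ` closure S)"
    using assms by (intro compact_imp_bounded compact_continuous_image) (auto simp: compact_closure)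
  then obtain B where "\<forall>y\<in>f ` closure S. norm y \<le> B"
    by (auto simp: bounded_iff)
  then have B: "\<And>x. x \<in> S \<Longrightarrow> norm (f x) \<le> B"
    using closure_subset by blast
  show ?thesis
  proof (rule measurable_bounded_by_integrable_imp_integrable[OF _ _ B])
    show "f \<in> borel_measurable (lebesgue_on S)"
      using continuous_on_subset[OF assms(1) closure_subset] S
      by (intro continuous_imp_measurable_on_sets_lebesgue fmeasurableD)
    show "(\<lambda>x. B) integrable_on S"
      using S by (rule integrable_on_const)
    show "S \<in> sets lebesgue"
      using S by (rule fmeasurableD)
  qed
qed

lemma interval_length_le_measure:
  fixes S :: "real set"
  assumes "is_interval S" and "bounded S" and "x \<in> S" and "y \<in> S" and "x \<le> y"
  shows "y - x \<le> measure lborel S"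
proof -
  have "{x..y} \<subseteq> S"
    using mem_is_interval_1_I[OF assms(1) assms(3) assms(4)] by auto
  moreover have "S \<in> fmeasurable lborel"
    using real_interval_borel_measurable[OF assms(1)] emeasure_bounded_finite[OF assms(2)]
    by (intro fmeasurableI) simp_all
  ultimately have "measure lborel {x..y} \<le> measure lborel S"
    by (intro measure_mono_fmeasurable) simp_all
  then show ?thesis
    using \<open>x \<le> y\<close> by simp
qed

lemma card_le_integral_of_gaps:
  fixes g :: "real \<Rightarrow> real" and Z S :: "real set"
  assumes "continuous_on UNIV g" and "\<And>t. 0 \<le> g t"
    and gap: "\<And>x y. x < y \<Longrightarrow> x \<in> Z \<Longrightarrow> y \<in> Z \<Longrightarrow> 1 \<le> integral {x..y} g"
    and "finite S" and "S \<subseteq> Z" and "S \<noteq> {}"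
  shows "real (card S) - 1 \<le> integral {Min S..Max S} g"
  using \<open>finite S\<close> \<open>S \<subseteq> Z\<close> \<open>S \<noteq> {}\<close>
proof (induction S rule: finite_linorder_max_induct)
  case (insert b A)
  show ?case
  proof (cases "A = {}")
    case True
    then show ?thesis
      using assms(2) by (simp add: integral_nonneg)
  next
    case False
    have "Max A < b" and "Min A \<le> Max A"
      using False insert.hyps by auto
    have "Min (insert b A) = Min A" and "Max (insert b A) = b"
      using False insert.hyps \<open>Max A < b\<close> \<open>Min A \<le> Max A\<close> by simp_all
    moreover have "integral {Min A..Max A} g + integral {Max A..b} g = integral {Min A..b} g"
      using \<open>Max A < b\<close> \<open>Min A \<le> Max A\<close> assms(1)
      by (intro Henstock_Kurzweil_Integration.integral_combine integrable_continuous_interval)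
        (auto intro: continuous_on_subset)
    moreover have "1 \<le> integral {Max A..b} g"
      using gap[OF \<open>Max A < b\<close>] insert.prems Max_in[OF insert.hyps(1) False] by auto
    ultimately show ?thesis
      using insert False by (simp add: card_insert_if)
  qed
qed simp

lemma one_less_arctan_two: "1 < arctan (2::real)"
proof -
  have "1/2 < cos (1::real)"
    using cos_monotone_0_pi[of 1 "pi/3"] pi_gt3 by (simp add: cos_60)
  then have "sin 1 < 2 * cos (1::real)"
    using sin_le_one[of 1] by linarith
  then have "tan (1::real) < 2"
    using \<open>1/2 < cos 1\<close> by (simp add: tan_def divide_less_eq)
  moreover have "arctan (tan 1) = (1::real)"
    using pi_gt3 by (intro arctan_tan) auto
  ultimately show ?thesis
    by (metis arctan_less_iff)
qed

lemma obtain_first_zero: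
  fixes f :: "real \<Rightarrow> real"
  assumes "continuous_on {x..z} f" and "f x \<noteq> 0" and "f z = 0" and "x \<le> z"
  obtains c where "x < c" "c \<le> z" "f c = 0" "\<And>t. x \<le> t \<Longrightarrow> t < c \<Longrightarrow> f t \<noteq> 0"
proof -
  define S where "S = {t \<in> {x..z}. f t = 0}"
  have "closed S"
    unfolding S_def using assms(1) by (intro continuous_closed_preimage_constant) auto
  moreover have "S \<noteq> {}" and "bdd_below S"
    using assms unfolding S_def by (auto intro: bdd_belowI[of _ x])
  ultimately have "Inf S \<in> S"
    by (intro closed_contains_Inf)
  then have "x \<le> Inf S" and "Inf S \<le> z" and "f (Inf S) = 0"
    unfolding S_def by auto
  show ?thesis
  proof (rule that)
    show "x < Inf S"
      using \<open>x \<le> Inf S\<close> \<open>f (Inf S) = 0\<close> assms(2) by (cases "x = Inf S") auto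
    show "f t \<noteq> 0" if "x \<le> t" "t < Inf S" for t
      using cInf_lower[OF _ \<open>bdd_below S\<close>, of t] that \<open>Inf S \<le> z\<close> unfolding S_def by force
  qed fact+
qed

locale positive_wronskian =
  fixes a b a' b' :: "real \<Rightarrow> real"
  assumes has_deriv_a: "\<And>t. (a has_real_derivative a' t) (at t)"
    and has_deriv_b: "\<And>t. (b has_real_derivative b' t) (at t)"
    and wronskian_pos: "\<And>t. 0 < a t * b' t - a' t * b t"
begin

definition angular_speed :: "real \<Rightarrow> real" where
  "angular_speed t = (a t * b' t - a' t * b t) / ((a t)\<^sup>2 + (b t)\<^sup>2)"

lemma continuous_on_a: "continuous_on A a"
  using has_deriv_a by (meson DERIV_isCont continuous_at_imp_continuous_on)

lemma continuous_on_b: "continuous_on A b"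
  using has_deriv_b by (meson DERIV_isCont continuous_at_imp_continuous_on)

lemma not_both_zero: "a t \<noteq> 0 \<or> b t \<noteq> 0"
  using wronskian_pos[of t] by auto

lemma angular_speed_nonneg: "0 \<le> angular_speed t"
  unfolding angular_speed_def using wronskian_pos[of t] by simp

lemma zero_between_zeros:
  assumes "x < y" and "a x = 0" and "a y = 0"
  shows "\<exists>z\<in>{x<..<y}. b z = 0"
proof (rule ccontr)
  assume no_zero: "\<not> (\<exists>z\<in>{x<..<y}. b z = 0)"
  have b_nonzero: "b t \<noteq> 0" if "x \<le> t" "t \<le> y" for t
  proof (cases "t = x \<or> t = y")
    case True
    then show ?thesis
      using not_both_zero[of t] assms by auto
  next
    case False
    then show ?thesis
      using no_zero that by auto
  qed
  \<comment> \<open>Otherwise \<open>a / b\<close> would be strictly decreasing on \<open>[x, y]\<close> while vanishing at both ends.\<close>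
  have "a y / b y < a x / b x"
  proof (rule DERIV_neg_imp_decreasing[OF \<open>x < y\<close>])
    fix t assume "x \<le> t" "t \<le> y"
    with b_nonzero have "b t \<noteq> 0" by blast
    then have "0 < b t * b t"
      by (simp flip: power2_eq_square)
    then show "\<exists>D. ((\<lambda>t. a t / b t) has_real_derivative D) (at t) \<and> D < 0"
      using wronskian_pos[of t]
      by (intro exI[of _ "(a' t * b t - a t * b' t) / (b t * b t)"] conjI
          DERIV_divide has_deriv_a has_deriv_b) (auto simp: divide_neg_pos)
  qed
  then show False
    using assms by simp
qed

lemma has_real_derivative_arctan_ratio:
  assumes "b t \<noteq> 0"
  shows "((\<lambda>t. arctan (a t / b t)) has_real_derivative - angular_speed t) (at t)"
proof -
  have "(a t)\<^sup>2 + (b t)\<^sup>2 \<noteq> 0"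
    using assms by (simp add: sum_power2_eq_zero_iff)
  moreover have "1 + (a t / b t)\<^sup>2 = ((a t)\<^sup>2 + (b t)\<^sup>2) / (b t)\<^sup>2"
    using assms by (simp add: field_simps)
  ultimately have "inverse (1 + (a t / b t)\<^sup>2) * ((a' t * b t - a t * b' t) / (b t * b t))
      = - angular_speed t"
    using assms unfolding angular_speed_def by (simp add: divide_simps) (simp add: power2_eq_square algebra_simps)
  then show ?thesis
    using DERIV_chain2[OF DERIV_arctan DERIV_divide[OF has_deriv_a has_deriv_b assms]] by simp
qed

lemma angular_speed_has_integral:
  assumes "x \<le> d" and "\<And>t. t \<in> {x..d} \<Longrightarrow> b t \<noteq> 0"
  shows "(angular_speed has_integral arctan (a x / b x) - arctan (a d / b d)) {x..d}"
proof -
  have "((\<lambda>t. - arctan (a t / b t)) has_vector_derivative angular_speed t) (at t within {x..d})"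
    if "t \<in> {x..d}" for t
    using DERIV_minus[OF has_real_derivative_arctan_ratio[OF assms(2)[OF that]]]
    by (simp add: has_real_derivative_iff_has_vector_derivative has_vector_derivative_at_within)
  from fundamental_theorem_of_calculus[OF assms(1) this] show ?thesis
    by simp
qed

lemma obtain_ratio_minus_two:
  assumes "x < y" and "a x = 0" and "a y = 0"
  obtains d where "x < d" "d < y" "\<And>t. t \<in> {x..d} \<Longrightarrow> b t \<noteq> 0" "a d / b d = -2"
proof -
  obtain z where "x < z" "z < y" "b z = 0"
    using zero_between_zeros[OF assms] by auto
  have "b x \<noteq> 0"
    using not_both_zero[of x] \<open>a x = 0\<close> by simp
  obtain c where "x < c" "c \<le> z" "b c = 0" and b_nonzero: "\<And>t. x \<le> t \<Longrightarrow> t < c \<Longrightarrow> b t \<noteq> 0"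
    using obtain_first_zero[OF continuous_on_b \<open>b x \<noteq> 0\<close> \<open>b z = 0\<close>] \<open>x < z\<close> by auto
  define \<psi> where "\<psi> t = \<bar>a t\<bar> - 2 * \<bar>b t\<bar>" for t
  have "\<psi> x < 0" and "0 < \<psi> c"
    using \<open>a x = 0\<close> \<open>b x \<noteq> 0\<close> \<open>b c = 0\<close> not_both_zero[of c] unfolding \<psi>_def by auto
  moreover have "continuous_on {x..c} \<psi>"
    unfolding \<psi>_def by (intro continuous_intros continuous_on_a continuous_on_b)
  ultimately obtain d where "x \<le> d" "d \<le> c" "\<psi> d = 0"
    using IVT'[of \<psi> x 0 c] \<open>x < c\<close> by force
  then have "x < d" "d < c" and ratio_abs: "\<bar>a d / b d\<bar> = 2"
    using \<open>\<psi> x < 0\<close> \<open>0 < \<psi> c\<close> b_nonzero[of d] unfolding \<psi>_def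
    by (auto simp: order_le_less abs_divide)
  \<comment> \<open>The sign is forced because the angle \<open>- arctan (a / b)\<close> is nondecreasing.\<close>
  have "(angular_speed has_integral - arctan (a d / b d)) {x..d}"
    using angular_speed_has_integral[of x d] \<open>x < d\<close> \<open>d < c\<close> b_nonzero \<open>a x = 0\<close> by simp
  then have "0 \<le> - arctan (a d / b d)"
    by (rule has_integral_nonneg) (simp add: angular_speed_nonneg)
  then have "a d / b d = -2"
    using ratio_abs by (simp add: arctan_le_zero_iff abs_if split: if_splits)
  then show ?thesis
    using that \<open>x < d\<close> \<open>d < c\<close> \<open>c \<le> z\<close> \<open>z < y\<close> b_nonzero by auto
qed

lemma one_le_integral_between_zeros:
  assumes g: "continuous_on UNIV g" and speed_le: "\<And>t. angular_speed t \<le> g t"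
    and "x < y" and "a x = 0" and "a y = 0"
  shows "1 \<le> integral {x..y} g"
proof -
  obtain d where "x < d" "d < y" and b_nonzero: "\<And>t. t \<in> {x..d} \<Longrightarrow> b t \<noteq> 0"
    and "a d / b d = -2"
    using obtain_ratio_minus_two[OF \<open>x < y\<close> \<open>a x = 0\<close> \<open>a y = 0\<close>] by blast
  have integrable_g: "g integrable_on {x..d}" "g integrable_on {x..y}"
    using g by (auto intro: integrable_continuous_interval continuous_on_subset)
  have "(angular_speed has_integral arctan 2) {x..d}"
    using angular_speed_has_integral[of x d, OF _ b_nonzero] \<open>x < d\<close> \<open>a x = 0\<close> \<open>a d / b d = -2\<close>
    by (simp add: arctan_minus)
  then have "arctan 2 \<le> integral {x..d} g"
    by (rule has_integral_le[OF _ integrable_integral[OF integrable_g(1)]]) (rule speed_le)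
  with one_less_arctan_two have "1 \<le> integral {x..d} g"
    by simp
  also have "\<dots> \<le> integral {x..y} g"
    using integrable_g \<open>x < d\<close> \<open>d < y\<close> speed_le angular_speed_nonneg
    by (intro integral_subset_le) (auto intro: order_trans)
  finally show ?thesis .
qed

end

text \<open>\<open>jacobi_sol v s0 s1 E\<close> is the solution of \<open>u\<^sub>k\<^sub>+\<^sub>1 + v\<^sub>k u\<^sub>k + u\<^sub>k\<^sub>-\<^sub>1 = E u\<^sub>k\<close> (the rows of
  \<open>H\<^sub>n u = E u\<close>) with \<open>u\<^sub>0 = s0\<close>, \<open>u\<^sub>1 = s1\<close>; \<open>jacobi_sol_deriv\<close> is its derivative in \<open>E\<close>.\<close>

fun jacobi_sol :: "(nat \<Rightarrow> real) \<Rightarrow> real \<Rightarrow> real \<Rightarrow> real \<Rightarrow> nat \<Rightarrow> real" where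
  "jacobi_sol v s0 s1 E 0 = s0"
| "jacobi_sol v s0 s1 E (Suc 0) = s1"
| "jacobi_sol v s0 s1 E (Suc (Suc k)) =
     (E - v (Suc k)) * jacobi_sol v s0 s1 E (Suc k) - jacobi_sol v s0 s1 E k"

fun jacobi_sol_deriv :: "(nat \<Rightarrow> real) \<Rightarrow> real \<Rightarrow> real \<Rightarrow> real \<Rightarrow> nat \<Rightarrow> real" where
  "jacobi_sol_deriv v s0 s1 E 0 = 0"
| "jacobi_sol_deriv v s0 s1 E (Suc 0) = 0"
| "jacobi_sol_deriv v s0 s1 E (Suc (Suc k)) = jacobi_sol v s0 s1 E (Suc k)
     + (E - v (Suc k)) * jacobi_sol_deriv v s0 s1 E (Suc k) - jacobi_sol_deriv v s0 s1 E k"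

definition jacobi_green :: "(nat \<Rightarrow> real) \<Rightarrow> real \<Rightarrow> nat \<Rightarrow> nat \<Rightarrow> real" where
  "jacobi_green v E k j =
     jacobi_sol v 0 1 E k * jacobi_sol v 1 0 E j - jacobi_sol v 1 0 E k * jacobi_sol v 0 1 E j"

lemma jacobi_sol_unique:
  assumes "\<And>k. Suc (Suc k) \<le> m \<Longrightarrow> w (Suc (Suc k)) = (E - v (Suc k)) * w (Suc k) - w k"
  shows "k \<le> m \<Longrightarrow> w k = jacobi_sol v (w 0) (w 1) E k"
  by (induction k rule: induct_nat_012) (auto simp: assms)

lemma jacobi_sol_scale: "jacobi_sol v (c * s0) (c * s1) E k = c * jacobi_sol v s0 s1 E k"
  by (induction k rule: induct_nat_012) (simp_all add: algebra_simps)

lemma has_real_derivative_jacobi_sol: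
  "((\<lambda>E. jacobi_sol v s0 s1 E k) has_real_derivative jacobi_sol_deriv v s0 s1 E k) (at E)"
  by (induction k rule: induct_nat_012) (auto intro!: derivative_eq_intros simp: algebra_simps)

lemma continuous_on_jacobi_sol: "continuous_on A (\<lambda>E. jacobi_sol v s0 s1 E k)"
  using has_real_derivative_jacobi_sol by (meson DERIV_isCont continuous_at_imp_continuous_on)

lemma jacobi_green_Suc_self: "jacobi_green v E (Suc k) k = 1"
  unfolding jacobi_green_def by (induction k) (auto simp: algebra_simps)

lemma jacobi_green_self: "jacobi_green v E k k = 0"
  by (simp add: jacobi_green_def)

lemma jacobi_green_rec:
  "jacobi_green v E (Suc (Suc k)) j =
     (E - v (Suc k)) * jacobi_green v E (Suc k) j - jacobi_green v E k j"
  by (simp add: jacobi_green_def algebra_simps)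

lemma jacobi_sol_deriv_eq:
  "jacobi_sol_deriv v s0 s1 E k = (\<Sum>j=1..<k. jacobi_green v E k j * jacobi_sol v s0 s1 E j)"
proof (induction k rule: induct_nat_012)
  case (ge2 k)
  let ?G = "jacobi_green v E" and ?s = "jacobi_sol v s0 s1 E"
  have "(\<Sum>j=1..<Suc (Suc k). ?G (Suc (Suc k)) j * ?s j)
      = ?s (Suc k) + (\<Sum>j=1..<Suc k. ?G (Suc (Suc k)) j * ?s j)"
    by (simp add: jacobi_green_Suc_self)
  also have "(\<Sum>j=1..<Suc k. ?G (Suc (Suc k)) j * ?s j)
      = (\<Sum>j=1..<Suc k. (E - v (Suc k)) * (?G (Suc k) j * ?s j) - ?G k j * ?s j)"
    by (intro sum.cong) (simp_all add: jacobi_green_rec algebra_simps)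
  also have "\<dots> = (E - v (Suc k)) * (\<Sum>j=1..<Suc k. ?G (Suc k) j * ?s j)
      - (\<Sum>j=1..<Suc k. ?G k j * ?s j)"
    by (simp only: sum_subtractf sum_distrib_left)
  also have "(\<Sum>j=1..<Suc k. ?G k j * ?s j) = (\<Sum>j=1..<k. ?G k j * ?s j)"
    by (cases k) (simp_all add: jacobi_green_self)
  finally show ?case using ge2 by simp
qed simp_all

lemma transferM_eq:
  "transferM v E l =
     vector [vector [jacobi_sol v 0 1 E (Suc l), jacobi_sol v 1 0 E (Suc l)],
             vector [jacobi_sol v 0 1 E l, jacobi_sol v 1 0 E l]]"
  by (induction l)
    (simp_all add: vec_eq_iff forall_2 mat_def vector_2 matrix_matrix_mult_def sum_2
      transferT_def algebra_simps)

lemma norm_transferM_sq: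
  "(norm (transferM v E l))\<^sup>2 =
     (jacobi_sol v 0 1 E (Suc l))\<^sup>2 + (jacobi_sol v 1 0 E (Suc l))\<^sup>2
     + (jacobi_sol v 0 1 E l)\<^sup>2 + (jacobi_sol v 1 0 E l)\<^sup>2"
  unfolding power2_norm_eq_inner by (simp add: transferM_eq inner_vec_def sum_2 power2_eq_square)

lemma jacobi_wronskian_eq:
  "jacobi_sol v 0 1 E (Suc n) * jacobi_sol_deriv v 1 0 E (Suc n)
     - jacobi_sol_deriv v 0 1 E (Suc n) * jacobi_sol v 1 0 E (Suc n)
   = (\<Sum>j=1..n. (jacobi_green v E (Suc n) j)\<^sup>2)"
proof -
  let ?u = "jacobi_sol v 0 1 E" and ?w = "jacobi_sol v 1 0 E" and ?G = "jacobi_green v E (Suc n)"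
  have "?u (Suc n) * (\<Sum>j=1..n. ?G j * ?w j) - (\<Sum>j=1..n. ?G j * ?u j) * ?w (Suc n)
      = (\<Sum>j=1..n. ?G j * (?u (Suc n) * ?w j - ?w (Suc n) * ?u j))"
    unfolding sum_distrib_left sum_distrib_right sum_subtractf[symmetric]
    by (intro sum.cong) (simp_all add: algebra_simps)
  also have "\<dots> = (\<Sum>j=1..n. (?G j)\<^sup>2)"
    by (simp add: jacobi_green_def power2_eq_square)
  finally show ?thesis
    by (simp add: jacobi_sol_deriv_eq atLeastLessThanSuc_atLeastAtMost)
qed

lemma jacobi_green_sq_le:
  "(jacobi_green v E k l)\<^sup>2
     \<le> ((jacobi_sol v 0 1 E k)\<^sup>2 + (jacobi_sol v 1 0 E k)\<^sup>2) * (norm (transferM v E l))\<^sup>2"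
proof -
  let ?a = "jacobi_sol v 0 1 E k" and ?b = "jacobi_sol v 1 0 E k"
    and ?u = "jacobi_sol v 0 1 E l" and ?w = "jacobi_sol v 1 0 E l"
  have "(jacobi_green v E k l)\<^sup>2 = (?a\<^sup>2 + ?b\<^sup>2) * (?u\<^sup>2 + ?w\<^sup>2) - (?a * ?u + ?b * ?w)\<^sup>2"
    by (simp add: jacobi_green_def power2_eq_square algebra_simps)
  also have "\<dots> \<le> (?a\<^sup>2 + ?b\<^sup>2) * (?u\<^sup>2 + ?w\<^sup>2)"
    by simp
  also have "\<dots> \<le> (?a\<^sup>2 + ?b\<^sup>2) * (norm (transferM v E l))\<^sup>2"
    unfolding norm_transferM_sq by (intro mult_left_mono) auto
  finally show ?thesis .
qed

lemma positive_wronskian_jacobi_sol: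
  assumes "1 \<le> n"
  shows "positive_wronskian (\<lambda>E. jacobi_sol v 0 1 E (Suc n)) (\<lambda>E. jacobi_sol v 1 0 E (Suc n))
    (\<lambda>E. jacobi_sol_deriv v 0 1 E (Suc n)) (\<lambda>E. jacobi_sol_deriv v 1 0 E (Suc n))"
proof
  fix E
  have "1 = (jacobi_green v E (Suc n) n)\<^sup>2"
    by (simp add: jacobi_green_Suc_self)
  also have "\<dots> \<le> (\<Sum>j=1..n. (jacobi_green v E (Suc n) j)\<^sup>2)"
    using assms by (intro member_le_sum) auto
  finally show "0 < jacobi_sol v 0 1 E (Suc n) * jacobi_sol_deriv v 1 0 E (Suc n)
      - jacobi_sol_deriv v 0 1 E (Suc n) * jacobi_sol v 1 0 E (Suc n)"
    by (simp add: jacobi_wronskian_eq)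
qed (rule has_real_derivative_jacobi_sol)+

lemma jacobi_angular_speed_le:
  assumes "1 \<le> n"
  shows "positive_wronskian.angular_speed (\<lambda>E. jacobi_sol v 0 1 E (Suc n))
      (\<lambda>E. jacobi_sol v 1 0 E (Suc n)) (\<lambda>E. jacobi_sol_deriv v 0 1 E (Suc n))
      (\<lambda>E. jacobi_sol_deriv v 1 0 E (Suc n)) E
    \<le> (\<Sum>l=1..n. (norm (transferM v E l))\<^sup>2)"
proof -
  interpret positive_wronskian "\<lambda>E. jacobi_sol v 0 1 E (Suc n)" "\<lambda>E. jacobi_sol v 1 0 E (Suc n)"
      "\<lambda>E. jacobi_sol_deriv v 0 1 E (Suc n)" "\<lambda>E. jacobi_sol_deriv v 1 0 E (Suc n)"
    using assms by (rule positive_wronskian_jacobi_sol)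
  let ?r = "(jacobi_sol v 0 1 E (Suc n))\<^sup>2 + (jacobi_sol v 1 0 E (Suc n))\<^sup>2"
  have "0 < ?r"
    using not_both_zero[of E] by (simp add: sum_power2_gt_zero_iff)
  have "angular_speed E = (\<Sum>j=1..n. (jacobi_green v E (Suc n) j)\<^sup>2) / ?r"
    unfolding angular_speed_def jacobi_wronskian_eq ..
  also have "\<dots> \<le> (\<Sum>l=1..n. ?r * (norm (transferM v E l))\<^sup>2) / ?r"
    using \<open>0 < ?r\<close> by (intro divide_right_mono sum_mono jacobi_green_sq_le) simp
  also have "\<dots> = (\<Sum>l=1..n. (norm (transferM v E l))\<^sup>2)"
    using \<open>0 < ?r\<close> by (simp only: flip: sum_distrib_left) (rule nonzero_mult_div_cancel_left, linarith)
  finally show ?thesis .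
qed

lemma sum_jacobiH_mult:
  assumes "i \<in> {1..n}" and "u 0 = 0" and "u (Suc n) = 0"
  shows "(\<Sum>j=1..n. jacobiH n v i j * u j) = u (i - 1) + v i * u i + u (Suc i)"
proof -
  have "jacobiH n v i j * u j = (if j = i then v i * u j else 0)
      + (if j = Suc i then u j else 0) + (if j = i - 1 then u j else 0)" for j
    using assms(1) by (auto simp: jacobiH_def)
  then have "(\<Sum>j=1..n. jacobiH n v i j * u j) = (\<Sum>j=1..n. if j = i then v i * u j else 0)
      + (\<Sum>j=1..n. if j = Suc i then u j else 0) + (\<Sum>j=1..n. if j = i - 1 then u j else 0)"
    by (simp add: sum.distrib)
  also have "\<dots> = u (i - 1) + v i * u i + u (Suc i)"
    using assms by (cases "i = n") (auto simp: sum.delta')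
  finally show ?thesis .
qed

lemma is_eigenvalue_H_imp_jacobi_sol_zero:
  assumes "is_eigenvalue_H n v E"
  shows "jacobi_sol v 0 1 E (Suc n) = 0"
proof -
  obtain u where nonzero: "\<exists>i\<in>{1..n}. u i \<noteq> 0"
    and eigen: "\<And>i. i \<in> {1..n} \<Longrightarrow> (\<Sum>j=1..n. jacobiH n v i j * u j) = E * u i"
    using assms unfolding is_eigenvalue_H_def by blast
  define w where "w j = (if j \<in> {1..n} then u j else 0)" for j
  have "(\<Sum>j=1..n. jacobiH n v i j * w j) = E * w i" if "i \<in> {1..n}" for i
    using eigen[OF that] that unfolding w_def by simp
  then have "w (Suc (Suc k)) = (E - v (Suc k)) * w (Suc k) - w k" if "Suc (Suc k) \<le> Suc n" for k
    using sum_jacobiH_mult[of "Suc k" n w v] that by (simp add: w_def algebra_simps)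
  then have w_eq: "w k = w 1 * jacobi_sol v 0 1 E k" if "k \<le> Suc n" for k
    using jacobi_sol_unique[of "Suc n" w E v k] jacobi_sol_scale[of v "w 1" 0 1 E k] that
    by (simp add: w_def)
  have "w 1 \<noteq> 0"
  proof
    assume "w 1 = 0"
    obtain i where "i \<in> {1..n}" and "u i \<noteq> 0"
      using nonzero by blast
    moreover have "w i = 0"
      using w_eq[of i] \<open>w 1 = 0\<close> \<open>i \<in> {1..n}\<close> by simp
    ultimately show False
      by (simp add: w_def)
  qed
  moreover have "w 1 * jacobi_sol v 0 1 E (Suc n) = 0"
    using w_eq[of "Suc n"] by (simp add: w_def)
  ultimately show ?thesis
    by simp
qed

lemma continuous_on_norm_transferM_sq: "continuous_on A (\<lambda>E. (norm (transferM v E l))\<^sup>2)"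
  unfolding norm_transferM_sq by (intro continuous_intros continuous_on_jacobi_sol)

lemma eig_count_le_integral:
  assumes "is_interval \<Delta>" and "bounded \<Delta>"
  shows "real (eig_count n v \<Delta>) - 1 \<le> integral \<Delta> (\<lambda>E. \<Sum>l=1..n. (norm (transferM v E l))\<^sup>2)"
proof -
  define g where "g E = (\<Sum>l=1..n. (norm (transferM v E l))\<^sup>2)" for E
  define S where "S = {E \<in> \<Delta>. is_eigenvalue_H n v E}"
  have g_cont: "continuous_on A g" for A
    unfolding g_def by (intro continuous_on_sum continuous_on_norm_transferM_sq)
  have "g integrable_on \<Delta>"
    using assms by (intro integrable_on_bounded_convex g_cont is_interval_convex)
  moreover have g_nonneg: "0 \<le> g E" for E
    unfolding g_def by (intro sum_nonneg) simp
  ultimately have integral_nonneg: "0 \<le> integral \<Delta> g"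
    by (intro integral_nonneg)
  have "eig_count n v \<Delta> = card S"
    by (simp add: eig_count_def S_def)
  show ?thesis
  proof (cases "finite S \<and> S \<noteq> {}")
    case False
    then have "card S = 0"
      by auto
    with integral_nonneg \<open>eig_count n v \<Delta> = card S\<close> show ?thesis
      unfolding g_def by simp
  next
    case True
    then obtain E where "is_eigenvalue_H n v E"
      unfolding S_def by auto
    then obtain i where "i \<in> {1..n}"
      unfolding is_eigenvalue_H_def by blast
    then have "1 \<le> n"
      by simp
    interpret positive_wronskian "\<lambda>E. jacobi_sol v 0 1 E (Suc n)" "\<lambda>E. jacobi_sol v 1 0 E (Suc n)"
        "\<lambda>E. jacobi_sol_deriv v 0 1 E (Suc n)" "\<lambda>E. jacobi_sol_deriv v 1 0 E (Suc n)"
      using \<open>1 \<le> n\<close> by (rule positive_wronskian_jacobi_sol)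
    have "real (card S) - 1 \<le> integral {Min S..Max S} g"
    proof (rule card_le_integral_of_gaps[OF g_cont g_nonneg])
      show "1 \<le> integral {x..y} g"
        if "x < y" "x \<in> {E. jacobi_sol v 0 1 E (Suc n) = 0}" "y \<in> {E. jacobi_sol v 0 1 E (Suc n) = 0}"
        for x y
        using that \<open>1 \<le> n\<close> unfolding g_def
        by (intro one_le_integral_between_zeros continuous_on_sum continuous_on_norm_transferM_sq
            jacobi_angular_speed_le) auto
      show "S \<subseteq> {E. jacobi_sol v 0 1 E (Suc n) = 0}"
        unfolding S_def using is_eigenvalue_H_imp_jacobi_sol_zero by blast
    qed (use True in auto)
    also have "\<dots> \<le> integral \<Delta> g"
    proof (rule integral_subset_le)
      have "Min S \<in> \<Delta>" and "Max S \<in> \<Delta>"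
        using Min_in[of S] Max_in[of S] True unfolding S_def by auto
      then show "{Min S..Max S} \<subseteq> \<Delta>"
        using mem_is_interval_1_I[OF assms(1)] by (meson atLeastAtMost_iff subsetI)
      show "g integrable_on {Min S..Max S}"
        by (rule integrable_continuous_interval[OF g_cont])
    qed (use \<open>g integrable_on \<Delta>\<close> g_nonneg in simp_all)
    finally show ?thesis
      unfolding \<open>eig_count n v \<Delta> = card S\<close> g_def .
  qed
qed

lemma measure_pos_if_eig_count_gt_one:
  assumes "is_interval \<Delta>" and "bounded \<Delta>" and "1 < eig_count n v \<Delta>"
  shows "0 < measure lborel \<Delta>"
proof -
  let ?S = "{E \<in> \<Delta>. is_eigenvalue_H n v E}"
  have "\<not> card ?S \<le> Suc 0" and "finite ?S"
    using assms(3) by (auto simp: eig_count_def intro: card_ge_0_finite)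
  then obtain E1 E2 where "E1 \<in> ?S" "E2 \<in> ?S" "E1 \<noteq> E2"
    using card_le_Suc0_iff_eq by blast
  then show ?thesis
    using interval_length_le_measure[OF assms(1,2), of E1 E2]
      interval_length_le_measure[OF assms(1,2), of E2 E1]
    by (cases "E1 < E2") auto
qed

theorem corollary11:
  fixes n :: nat and v :: "nat \<Rightarrow> real" and \<Delta> :: "real set" and \<beta> :: real
  assumes "is_interval \<Delta>" and "bounded \<Delta>" and "\<beta> > 0"
  shows "(max 0 (real (eig_count n v \<Delta>) - 1)) powr (1 + \<beta>)
    \<le> (real n * measure lborel \<Delta>) powr \<beta> *
       integral \<Delta> (\<lambda>E. \<Sum>l=1..n. norm (transferM v E l) powr (2 + 2 * \<beta>))"
proof -
  let ?M2 = "\<lambda>l E. (norm (transferM v E l))\<^sup>2"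
  have norm_powr: "norm (transferM v E l) powr (2 + 2 * \<beta>) = ?M2 l E powr (1 + \<beta>)" for E l
    by (simp add: powr_powr flip: powr_numeral)
  have integrable: "f integrable_on \<Delta>" if "continuous_on UNIV f" for f :: "real \<Rightarrow> real"
    using assms(1,2) continuous_on_subset[OF that]
    by (intro integrable_on_bounded_convex is_interval_convex) auto
  have M2_powr_cont: "continuous_on UNIV (\<lambda>E. ?M2 l E powr (1 + \<beta>))" for l
    using \<open>\<beta> > 0\<close> by (intro continuous_on_powr' continuous_on_norm_transferM_sq continuous_on_const) auto
  show ?thesis
  proof (cases "eig_count n v \<Delta> \<le> 1")
    case True
    have "0 \<le> integral \<Delta> (\<lambda>E. \<Sum>l=1..n. ?M2 l E powr (1 + \<beta>))"
      by (intro integral_nonneg integrable continuous_on_sum M2_powr_cont sum_nonneg) auto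
    with True show ?thesis
      by (simp add: norm_powr)
  next
    case False
    have "(max 0 (real (eig_count n v \<Delta>) - 1)) powr (1 + \<beta>)
        \<le> integral \<Delta> (\<lambda>E. \<Sum>l=1..n. ?M2 l E) powr (1 + \<beta>)"
      using False eig_count_le_integral[OF assms(1,2)] \<open>\<beta> > 0\<close> by (intro powr_mono2) auto
    also have "\<dots> \<le> (real (card {1..n}) * measure lborel \<Delta>) powr (1 + \<beta> - 1)
        * integral \<Delta> (\<lambda>E. \<Sum>l=1..n. ?M2 l E powr (1 + \<beta>))"
      using \<open>\<beta> > 0\<close> measure_pos_if_eig_count_gt_one[of \<Delta> n v] assms False
        has_integral_measure_lborel[OF real_interval_borel_measurable emeasure_bounded_finite, OF assms(1,2)]
      by (intro powr_integral_sum_le integrable continuous_on_norm_transferM_sq M2_powr_cont) auto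
    finally show ?thesis
      by (simp add: norm_powr)
  qed
qed

end
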